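(* Let $n\ge3$, $2\le i\le n-1$, $\mathfrak g=\mathfrak{sp}(n,\mathbb C)$, $\mathfrak q$ of type $C_n(i)$, $\mu=\varepsilon_1+\varepsilon_{i+1}$, $\epsilon_\gamma=\varepsilon_2-\varepsilon_{i+1}$, and set $Y^*_l:=\frac{8c_0^2}{i+1}\mathrm{pr}_{\mathfrak l_\gamma\otimes\mathfrak z(\bar{\mathfrak n})}(\bar\tau_2(X_{-\mu}+X_{-\epsilon_\gamma}))$. Then $$Y^*_l=\frac{4c_0}{i+1}X_{\varepsilon_1-\varepsilon_2}\otimes X_{-2\varepsilon_1}-\frac{4c_0}{i+1}X_{-(\varepsilon_1-\varepsilon_2)}\otimes X_{-2\varepsilon_2}+\frac{2c_0}{i+1}\sum_{k=3}^iX_{-(\varepsilon_2-\varepsilon_k)}\otimes X_{-(\varepsilon_1+\varepsilon_k)}$$ $$-\frac{2c_0}{i+1}\sum_{k=3}^iX_{-(\varepsilon_1-\varepsilon_k)}\otimes X_{-(\varepsilon_2+\varepsilon_k)}-\frac{2c_0}{i+1}H_{\varepsilon_1-\varepsilon_2}\otimes X_{-(\varepsilon_1+\varepsilon_2)}.$$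
   Context: $\mathfrak g=\mathfrak{sp}(n,\mathbb C)\subset\mathfrak{gl}(2n,\mathbb C)$; $\hat j=j+n$, $E_{ab}$ matrix units. Cartan $\mathfrak h$ = matrices $\sum_jh_j(E_{jj}-E_{\hat j\hat j})$, $\varepsilon_j$ picks $h_j$. Roots $\pm\varepsilon_j\pm\varepsilon_k$ ($j<k$), $\pm2\varepsilon_j$; simple roots $\alpha_j=\varepsilon_j-\varepsilon_{j+1}$ ($j<n$), $\alpha_n=2\varepsilon_n$. Root vectors: $X_{\varepsilon_j-\varepsilon_k}=E_{jk}-E_{\hat k\hat j}$ for $j\neq k$ (so $X_{-(\varepsilon_j-\varepsilon_k)}=X_{\varepsilon_k-\varepsilon_j}$), $X_{\varepsilon_j+\varepsilon_k}=E_{j\hat k}+E_{k\hat j}$, $X_{-(\varepsilon_j+\varepsilon_k)}=E_{\hat jk}+E_{\hat kj}$, $X_{2\varepsilon_j}=E_{j\hat j}$, $X_{-2\varepsilon_j}=E_{\hat jj}$; $H_\alpha=[X_\alpha,X_{-\alpha}]$, so $H_{\varepsilon_1-\varepsilon_2}=(E_{11}-E_{\hat1\hat1})-(E_{22}-E_{\hat2\hat2})$. The Killing form is $\kappa=c_0\mathrm{Tr}(XY)$, $c_0>0$ constant. $\mathfrak q=\mathfrak l\oplus\mathfrak n$ is the standard maximal parabolic subalgebra determined by $\alpha_i$; grading $\mathfrak g=\bigoplus_{j=-2}^2\mathfrak g(j)$ by the $\alpha_i$-coefficient, $\mathfrak l=\mathfrak g(0)$, $\mathfrak z(\bar{\mathfrak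 n})=\mathfrak g(-2)$ (roots $-(\varepsilon_j+\varepsilon_k)$, $j<k\le i$, and $-2\varepsilon_j$, $j\le i$), $\mathfrak g(-1)$ has roots $-(\varepsilon_j\pm\varepsilon_k)$, $j\le i<k$. $\mathfrak l=\mathfrak z(\mathfrak l)\oplus\mathfrak l_\gamma\oplus\mathfrak l_{n\gamma}$ with $\mathfrak l_\gamma\cong\mathfrak{sl}(i,\mathbb C)$ (simple roots $\alpha_1,\dots,\alpha_{i-1}$), $\mathfrak l_{n\gamma}\cong\mathfrak{sp}(n-i,\mathbb C)$ (simple roots $\alpha_{i+1},\dots,\alpha_n$), $\mathfrak z(\mathfrak l)$ the center; $\mathrm{pr}_{\mathfrak l_\gamma\otimes\mathfrak z(\bar{\mathfrak n})}$ is the projection along this decomposition. $\bar\omega=\frac1{c_0}\sum_{j=1}^iX_{2\varepsilon_j}\otimes X_{-2\varepsilon_j}+\frac1{2c_0}\sum_{1\le j<k\le i}X_{\varepsilon_j+\varepsilon_k}\otimes X_{-(\varepsilon_j+\varepsilon_k)}$, $\bar\tau_2(Y)=\tfrac12(\mathrm{ad}(Y)^2\otimes\mathrm{Id})\bar\omega$ for $Y\in\mathfrak g(-1)$. *)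

theory Defs
  imports Complex_Main
begin

text \<open>Matrices in gl(2n,C) are functions nat => nat => complex with
  row/column indices in {1..2n} (entries outside are 0 for all objects used).
  An element of gl(2n) (x) gl(2n) (hence of g (x) g) is a 4-index array T, where
  T a b c d is the coefficient of E_ab (x) E_cd.\<close>

type_synonym cmat = "nat \<Rightarrow> nat \<Rightarrow> complex"
type_synonym ctens = "nat \<Rightarrow> nat \<Rightarrow> nat \<Rightarrow> nat \<Rightarrow> complex"

definition Emat :: "nat \<Rightarrow> nat \<Rightarrow> cmat" where
  "Emat a b = (\<lambda>r s. if r = a \<and> s = b then 1 else 0)"

definition hat :: "nat \<Rightarrow> nat \<Rightarrow> nat" where
  "hat n j = j + n"

definition mmul :: "nat \<Rightarrow> cmat \<Rightarrow> cmat \<Rightarrow> cmat" where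
  "mmul n X Y = (\<lambda>r s. \<Sum>t\<in>{1..2*n}. X r t * Y t s)"

definition bracket :: "nat \<Rightarrow> cmat \<Rightarrow> cmat \<Rightarrow> cmat" where
  "bracket n X Y = (\<lambda>r s. mmul n X Y r s - mmul n Y X r s)"

definition Xdiff :: "nat \<Rightarrow> nat \<Rightarrow> nat \<Rightarrow> cmat" where
  "Xdiff n j k = (\<lambda>r s. Emat j k r s - Emat (hat n k) (hat n j) r s)"

definition Xsum :: "nat \<Rightarrow> nat \<Rightarrow> nat \<Rightarrow> cmat" where
  "Xsum n j k = (\<lambda>r s. Emat j (hat n k) r s + Emat k (hat n j) r s)"

definition Xnegsum :: "nat \<Rightarrow> nat \<Rightarrow> nat \<Rightarrow> cmat" where
  "Xnegsum n j k = (\<lambda>r s. Emat (hat n j) k r s + Emat (hat n k) j r s)"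

definition Xtwo :: "nat \<Rightarrow> nat \<Rightarrow> cmat" where
  "Xtwo n j = Emat j (hat n j)"

definition Xnegtwo :: "nat \<Rightarrow> nat \<Rightarrow> cmat" where
  "Xnegtwo n j = Emat (hat n j) j"

definition Hdiag :: "nat \<Rightarrow> nat \<Rightarrow> cmat" where
  "Hdiag n j = (\<lambda>r s. Emat j j r s - Emat (hat n j) (hat n j) r s)"

text \<open>H_alpha = [X_alpha, X_{-alpha}]; for alpha = eps_1 - eps_2, X_{-alpha} = X_{eps_2 - eps_1}.\<close>
definition H12 :: "nat \<Rightarrow> cmat" where
  "H12 n = bracket n (Xdiff n 1 2) (Xdiff n 2 1)"

definition tens :: "cmat \<Rightarrow> cmat \<Rightarrow> ctens" where
  "tens X Y = (\<lambda>a b c d. X a b * Y c d)"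

text \<open>omega-bar, with Killing form constant c0.\<close>
definition omega_bar :: "nat \<Rightarrow> nat \<Rightarrow> real \<Rightarrow> ctens" where
  "omega_bar n i c0 = (\<lambda>a b c d.
      (1 / complex_of_real c0) * (\<Sum>j\<in>{1..i}. tens (Xtwo n j) (Xnegtwo n j) a b c d)
    + (1 / (2 * complex_of_real c0)) *
        (\<Sum>j\<in>{1..i}. \<Sum>k\<in>{j+1..i}. tens (Xsum n j k) (Xnegsum n j k) a b c d))"

definition ad_first :: "nat \<Rightarrow> cmat \<Rightarrow> ctens \<Rightarrow> ctens" where
  "ad_first n Y T = (\<lambda>a b c d. (\<Sum>e\<in>{1..2*n}. Y a e * T e b c d) - (\<Sum>e\<in>{1..2*n}. T a e c d * Y e b))"

definition tau2_bar :: "nat \<Rightarrow> nat \<Rightarrow> real \<Rightarrow> cmat \<Rightarrow> ctens" where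
  "tau2_bar n i c0 Y = (\<lambda>a b c d. (1/2) * ad_first n Y (ad_first n Y (omega_bar n i c0)) a b c d)"

text \<open>Projection of g onto l_gamma = sl(i) along the decomposition
  g = h (+) root spaces, h = (h cap l_gamma) (+) z(l) (+) (h cap l_ngamma):
  the component along X_{eps_j - eps_k} (j,k <= i, j ~= k) is the (j,k) entry, and the
  Cartan component is the traceless part of (h_1,...,h_i) (the mean being the z(l) part).\<close>
definition pr_lgamma :: "nat \<Rightarrow> nat \<Rightarrow> cmat \<Rightarrow> cmat" where
  "pr_lgamma n i X = (\<lambda>r s.
      (\<Sum>j\<in>{1..i}. \<Sum>k\<in>{1..i}. if j \<noteq> k then X j k * Xdiff n j k r s else 0)
    + (\<Sum>j\<in>{1..i}. (X j j - (\<Sum>l\<in>{1..i}. X l l) / of_nat i) * Hdiag n j r s))"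

definition pr_zn :: "nat \<Rightarrow> nat \<Rightarrow> cmat \<Rightarrow> cmat" where
  "pr_zn n i X = (\<lambda>r s. \<Sum>j\<in>{1..i}. \<Sum>k\<in>{1..i}. X (hat n j) k * Emat (hat n j) k r s)"

definition pr_tens :: "nat \<Rightarrow> nat \<Rightarrow> ctens \<Rightarrow> ctens" where
  "pr_tens n i T = (\<lambda>a b c d. \<Sum>p\<in>{1..2*n}. \<Sum>q\<in>{1..2*n}. \<Sum>r\<in>{1..2*n}. \<Sum>s\<in>{1..2*n}.
      T p q r s * pr_lgamma n i (Emat p q) a b * pr_zn n i (Emat r s) c d)"

end

theory Submission
  imports Defs
begin

(* On the entries (p, q) with p, q <= i of the first tensor factor -- the only ones that survive
   the projection to l_gamma -- the operator ad(Y)^2 for Y = X_{-mu} + X_{-eps_gamma} just reads off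
   columns hat 1 and hat 2 of omega-bar: its (p, 2)-entry is the (p, hat 1)-entry and its (p, 1)-entry
   is minus the (p, hat 2)-entry.  Hence only the X_{-2 eps_1}, X_{-2 eps_2}, X_{-(eps_1 + eps_k)} and
   X_{-(eps_2 + eps_k)} terms of omega-bar contribute: rows p >= 3 give the two sums, and rows 1 and 2
   give the remaining terms, in which the central parts of the two Cartan components cancel and leave
   H_{eps_1 - eps_2}. *)

lemma sum_Emat_left:
  "(\<Sum>t\<in>{1..m}. Emat x y r t * f t) = (if r = x \<and> y \<in> {1..m} then f y else 0)"
proof -
  have "(\<Sum>t\<in>{1..m}. Emat x y r t * f t) = (\<Sum>t\<in>{1..m}. if t = y then (if r = x then f y else 0) else 0)"
    by (rule sum.cong) (auto simp: Emat_def)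
  then show ?thesis by simp
qed

lemma sum_Emat_right:
  "(\<Sum>t\<in>{1..m}. f t * Emat x y t s) = (if s = y \<and> x \<in> {1..m} then f x else 0)"
proof -
  have "(\<Sum>t\<in>{1..m}. f t * Emat x y t s) = (\<Sum>t\<in>{1..m}. if t = x then (if s = y then f x else 0) else 0)"
    by (rule sum.cong) (auto simp: Emat_def)
  then show ?thesis by simp
qed

lemma sum_Emat_diagonal:
  "(\<Sum>l\<in>{1..m}. Emat p q l l * f l) = (if p = q \<and> p \<in> {1..m} then f p else 0)"
  using sum_Emat_left[where x = p and y = q and r = p and f = f and m = m] by (auto simp: Emat_def intro!: sum.neutral)

lemma sum_sum_Emat:
  "(\<Sum>r\<in>{1..m}. \<Sum>s\<in>{1..m}. g r s * Emat c d r s) = (if c \<in> {1..m} \<and> d \<in> {1..m} then g c d else 0)"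
proof -
  have "(\<Sum>s\<in>{1..m}. g r s * Emat c d r s) = (if r = c then (if d \<in> {1..m} then g c d else 0) else 0)" for r
    using sum_Emat_left[where x = c and y = d and r = r and f = "g r" and m = m] by (simp add: mult.commute)
  then show ?thesis by auto
qed

lemma ad_first_Emat:
  assumes "x \<in> {1..2*n}" "y \<in> {1..2*n}"
  shows "ad_first n (Emat x y) T a b c d
       = (if a = x then T y b c d else 0) - (if b = y then T a x c d else 0)"
  using assms by (simp only: ad_first_def sum_Emat_left sum_Emat_right) simp

lemma ad_first_add:
  "ad_first n (\<lambda>r s. X r s + Y r s) T a b c d = ad_first n X T a b c d + ad_first n Y T a b c d"
  by (simp add: ad_first_def distrib_left distrib_right sum.distrib)

lemma ad_first_diff:
  "ad_first n (\<lambda>r s. X r s - Y r s) T a b c d = ad_first n X T a b c d - ad_first n Y T a b c d"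
  by (simp add: ad_first_def left_diff_distrib right_diff_distrib sum_subtractf)

(* X_{-mu} + X_{-eps_gamma} with mu = eps_1 + eps_{i+1} and eps_gamma = eps_2 - eps_{i+1} *)
definition Y_mu_gamma :: "nat \<Rightarrow> nat \<Rightarrow> cmat" where
  "Y_mu_gamma n i = (\<lambda>r s. Xnegsum n 1 (i+1) r s + Xdiff n (i+1) 2 r s)"

lemma ad_first_Y_mu_gamma:
  assumes "1 \<le> i" "i < n"
  shows "ad_first n (Y_mu_gamma n i) T a b c d =
      (if a = 1+n then T (i+1) b c d else 0) + (if a = i+1+n then T 1 b c d else 0)
    + (if a = i+1 then T 2 b c d else 0) - (if a = 2+n then T (i+1+n) b c d else 0)
    - (if b = i+1 then T a (1+n) c d else 0) - (if b = 1 then T a (i+1+n) c d else 0)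
    - (if b = 2 then T a (i+1) c d else 0) + (if b = i+1+n then T a (2+n) c d else 0)"
    (is "_ = ?rhs")
proof -
  have "ad_first n (Y_mu_gamma n i) T a b c d
      = ad_first n (Emat (1+n) (i+1)) T a b c d + ad_first n (Emat (i+1+n) 1) T a b c d
      + (ad_first n (Emat (i+1) 2) T a b c d - ad_first n (Emat (2+n) (i+1+n)) T a b c d)"
    unfolding Y_mu_gamma_def Xnegsum_def Xdiff_def hat_def ad_first_add ad_first_diff
    by (simp add: add.commute)
  also have "\<dots> = ?rhs"
  proof -
    have "1+n \<in> {1..2*n}" "i+1+n \<in> {1..2*n}" "2+n \<in> {1..2*n}"
         "1 \<in> {1..2*n}" "2 \<in> {1..2*n}" "i+1 \<in> {1..2*n}"
      using assms by auto
    then show ?thesis by (simp only: ad_first_Emat) (simp add: algebra_simps)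
  qed
  finally show ?thesis .
qed

lemma ad_first_Y_mu_gamma_twice:
  assumes "1 \<le> i" "i < n" "p \<le> i" "q \<le> i"
  shows "ad_first n (Y_mu_gamma n i) (ad_first n (Y_mu_gamma n i) T) p q c d
       = (if q = 2 then T p (1+n) c d else 0) - (if q = 1 then T p (2+n) c d else 0)"
  using assms by (simp only: ad_first_Y_mu_gamma) simp

lemma Xnegsum_commute: "Xnegsum n k j = Xnegsum n j k"
  by (simp add: Xnegsum_def add.commute)

lemma omega_bar_entry:
  assumes "p \<in> {1..i}" "k \<in> {1..i}"
  shows "omega_bar n i c0 p (k + n) c d
       = (if p = k then Xnegtwo n p c d else Xnegsum n p k c d / 2) / complex_of_real c0"
proof -
  have long: "(\<Sum>j\<in>{1..i}. tens (Xtwo n j) (Xnegtwo n j) p (k+n) c d)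
      = (if p = k then Xnegtwo n p c d else 0)"
  proof -
    have "(\<Sum>j\<in>{1..i}. tens (Xtwo n j) (Xnegtwo n j) p (k+n) c d)
        = (\<Sum>j\<in>{1..i}. if j = p then (if p = k then Xnegtwo n p c d else 0) else 0)"
      by (rule sum.cong) (auto simp: tens_def Xtwo_def Emat_def hat_def)
    then show ?thesis using assms by simp
  qed
  have short_row: "(\<Sum>l\<in>{j+1..i}. tens (Xsum n j l) (Xnegsum n j l) p (k+n) c d)
      = (if j = p then (if p < k then Xnegsum n p k c d else 0) else 0)
      + (if j = k then (if k < p then Xnegsum n k p c d else 0) else 0)" for j
  proof -
    have "(\<Sum>l\<in>{j+1..i}. tens (Xsum n j l) (Xnegsum n j l) p (k+n) c d)
        = (\<Sum>l\<in>{j+1..i}. (if l = k then (if j = p then Xnegsum n p k c d else 0) else 0)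
                         + (if l = p then (if j = k then Xnegsum n k p c d else 0) else 0))"
      by (rule sum.cong) (auto simp: tens_def Xsum_def Emat_def hat_def)
    then show ?thesis using assms by (auto simp: sum.distrib)
  qed
  have short: "(\<Sum>j\<in>{1..i}. \<Sum>l\<in>{j+1..i}. tens (Xsum n j l) (Xnegsum n j l) p (k+n) c d)
      = (if p = k then 0 else Xnegsum n p k c d)"
    using assms by (simp only: short_row sum.distrib) (auto simp: Xnegsum_commute)
  show ?thesis
    unfolding omega_bar_def long short by (simp add: field_simps)
qed

lemma pr_zn_eq:
  "pr_zn n i X c d = (if c \<in> {n+1..n+i} \<and> d \<in> {1..i} then X c d else 0)"
proof -
  have row: "(\<Sum>k\<in>{1..i}. X (j+n) k * Emat (j+n) k c d) = (if c = j + n \<and> d \<in> {1..i} then X c d else 0)" for j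
  proof -
    have "(\<Sum>k\<in>{1..i}. X (j+n) k * Emat (j+n) k c d)
        = (\<Sum>k\<in>{1..i}. if k = d then (if c = j + n then X c d else 0) else 0)"
      by (rule sum.cong) (auto simp: Emat_def)
    then show ?thesis by auto
  qed
  have "pr_zn n i X c d
      = (\<Sum>j\<in>{1..i}. if j = c - n then (if n < c \<and> d \<in> {1..i} then X c d else 0) else 0)"
    unfolding pr_zn_def hat_def row by (rule sum.cong) auto
  then show ?thesis by auto
qed

lemma pr_lgamma_Emat:
  "pr_lgamma n i (Emat p q) a b = (if p \<in> {1..i} \<and> q \<in> {1..i} then
      (if p \<noteq> q then Xdiff n p q a b else Hdiag n p a b - (\<Sum>l\<in>{1..i}. Hdiag n l a b) / of_nat i) else 0)"
proof -
  have off_diagonal: "(\<Sum>j\<in>{1..i}. \<Sum>k\<in>{1..i}. if j \<noteq> k then Emat p q j k * Xdiff n j k a b else 0)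
     = (if p \<in> {1..i} \<and> q \<in> {1..i} \<and> p \<noteq> q then Xdiff n p q a b else 0)"
  proof -
    have "(\<Sum>k\<in>{1..i}. if j \<noteq> k then Emat p q j k * Xdiff n j k a b else 0)
        = (\<Sum>k\<in>{1..i}. Emat p q j k * (if j \<noteq> k then Xdiff n j k a b else 0))" for j
      by (rule sum.cong) auto
    then show ?thesis
      by (simp only: sum_Emat_left) (simp add: if_if_eq_conj[symmetric, of "_ = p"])
  qed
  have diagonal: "(\<Sum>j\<in>{1..i}. (Emat p q j j - (\<Sum>l\<in>{1..i}. Emat p q l l) / of_nat i) * Hdiag n j a b)
     = (if p = q \<and> p \<in> {1..i} then Hdiag n p a b - (\<Sum>l\<in>{1..i}. Hdiag n l a b) / of_nat i else 0)"
  proof -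
    have trace: "(\<Sum>l\<in>{1..i}. Emat p q l l) = (if p = q \<and> p \<in> {1..i} then 1 else 0)"
      using sum_Emat_diagonal[where f = "\<lambda>_. 1" and m = i and p = p and q = q] by simp
    have "(\<Sum>j\<in>{1..i}. (Emat p q j j - (\<Sum>l\<in>{1..i}. Emat p q l l) / of_nat i) * Hdiag n j a b)
      = (\<Sum>j\<in>{1..i}. Emat p q j j * Hdiag n j a b)
        - (\<Sum>l\<in>{1..i}. Emat p q l l) / of_nat i * (\<Sum>j\<in>{1..i}. Hdiag n j a b)"
      by (simp only: left_diff_distrib sum_subtractf sum_distrib_left)
    then show ?thesis by (simp only: sum_Emat_diagonal trace) simp
  qed
  show ?thesis unfolding pr_lgamma_def off_diagonal diagonal by auto
qed

lemma pr_tens_eq: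
  assumes "i \<le> n"
  shows "pr_tens n i T a b c d = (if c \<in> {n+1..n+i} \<and> d \<in> {1..i} then
     (\<Sum>p\<in>{1..i}. \<Sum>q\<in>{1..i}. T p q c d * pr_lgamma n i (Emat p q) a b) else 0)"
proof (cases "c \<in> {n+1..n+i} \<and> d \<in> {1..i}")
  case True
  let ?L = "\<lambda>p q. pr_lgamma n i (Emat p q) a b"
  have cd: "c \<in> {1..2*n}" "d \<in> {1..2*n}" using True assms by auto
  have "(\<Sum>r\<in>{1..2*n}. \<Sum>s\<in>{1..2*n}. T p q r s * ?L p q * pr_zn n i (Emat r s) c d)
      = (\<Sum>r\<in>{1..2*n}. \<Sum>s\<in>{1..2*n}. (T p q r s * ?L p q) * Emat c d r s)" for p q
    using True by (intro sum.cong refl) (auto simp: pr_zn_eq Emat_def)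
  then have "pr_tens n i T a b c d = (\<Sum>p\<in>{1..2*n}. \<Sum>q\<in>{1..2*n}. T p q c d * ?L p q)"
    unfolding pr_tens_def using cd by (simp only: sum_sum_Emat) simp
  also have "\<dots> = (\<Sum>p\<in>{1..i}. \<Sum>q\<in>{1..i}. T p q c d * ?L p q)"
  proof -
    have sub: "{1..i} \<subseteq> {1..2*n}" using assms by auto
    have "(\<Sum>q\<in>{1..2*n}. T p q c d * ?L p q) = (\<Sum>q\<in>{1..i}. T p q c d * ?L p q)" for p
      by (rule sum.mono_neutral_right) (use sub in \<open>auto simp: pr_lgamma_Emat\<close>)
    then show ?thesis
      by (simp, intro sum.mono_neutral_right) (use sub in \<open>auto simp: pr_lgamma_Emat intro!: sum.neutral\<close>)
  qed
  finally show ?thesis using True by simp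
next
  case False
  then show ?thesis unfolding pr_tens_def pr_zn_eq if_not_P[OF False] by simp
qed

lemma tau2_bar_Y_mu_gamma_entry:
  assumes "1 \<le> i" "i < n" "p \<le> i" "q \<le> i"
  shows "tau2_bar n i c0 (Y_mu_gamma n i) p q c d
       = ((if q = 2 then omega_bar n i c0 p (1+n) c d else 0)
         - (if q = 1 then omega_bar n i c0 p (2+n) c d else 0)) / 2"
  unfolding tau2_bar_def using ad_first_Y_mu_gamma_twice[OF assms] by simp

definition tau2_row :: "nat \<Rightarrow> nat \<Rightarrow> real \<Rightarrow> nat \<Rightarrow> nat \<Rightarrow> nat \<Rightarrow> nat \<Rightarrow> nat \<Rightarrow> complex" where
  "tau2_row n i c0 p a b c d =
     omega_bar n i c0 p (1+n) c d * pr_lgamma n i (Emat p 2) a b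
   - omega_bar n i c0 p (2+n) c d * pr_lgamma n i (Emat p 1) a b"

lemma pr_tens_tau2_bar_Y_mu_gamma:
  assumes "2 \<le> i" "i < n" "c \<in> {n+1..n+i}" "d \<in> {1..i}"
  shows "pr_tens n i (tau2_bar n i c0 (Y_mu_gamma n i)) a b c d
       = (\<Sum>p\<in>{1..i}. tau2_row n i c0 p a b c d) / 2"
    (is "_ = ?rhs")
proof -
  have row: "(\<Sum>q\<in>{1..i}. tau2_bar n i c0 (Y_mu_gamma n i) p q c d * pr_lgamma n i (Emat p q) a b)
      = tau2_row n i c0 p a b c d / 2" if "p \<le> i" for p
  proof -
    have "(\<Sum>q\<in>{1..i}. tau2_bar n i c0 (Y_mu_gamma n i) p q c d * pr_lgamma n i (Emat p q) a b)
        = (\<Sum>q\<in>{1..i}. (if q = 2 then omega_bar n i c0 p (1+n) c d * pr_lgamma n i (Emat p 2) a b / 2 else 0)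
                       - (if q = 1 then omega_bar n i c0 p (2+n) c d * pr_lgamma n i (Emat p 1) a b / 2 else 0))"
      using assms that by (intro sum.cong refl) (auto simp: tau2_bar_Y_mu_gamma_entry)
    then show ?thesis
      using assms by (simp add: tau2_row_def sum_subtractf diff_divide_distrib)
  qed
  have "pr_tens n i (tau2_bar n i c0 (Y_mu_gamma n i)) a b c d
      = (\<Sum>p\<in>{1..i}. \<Sum>q\<in>{1..i}. tau2_bar n i c0 (Y_mu_gamma n i) p q c d * pr_lgamma n i (Emat p q) a b)"
    using assms by (simp only: pr_tens_eq) simp
  also have "\<dots> = ?rhs"
    unfolding sum_divide_distrib by (rule sum.cong[OF refl], rule row) simp
  finally show ?thesis .
qed

lemma H12_eq:
  assumes "2 \<le> n"
  shows "H12 n a b = Hdiag n 1 a b - Hdiag n 2 a b"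
proof -
  have m1: "mmul n (Xdiff n 1 2) (Xdiff n 2 1) a b = Emat 1 1 a b + Emat (2+n) (2+n) a b"
    unfolding mmul_def Xdiff_def hat_def
    by (simp only: left_diff_distrib sum_subtractf sum_Emat_left) (use assms in \<open>auto simp: Emat_def\<close>)
  have m2: "mmul n (Xdiff n 2 1) (Xdiff n 1 2) a b = Emat 2 2 a b + Emat (1+n) (1+n) a b"
    unfolding mmul_def Xdiff_def hat_def
    by (simp only: left_diff_distrib sum_subtractf sum_Emat_left) (use assms in \<open>auto simp: Emat_def\<close>)
  show ?thesis unfolding H12_def bracket_def m1 m2 Hdiag_def hat_def by (simp add: add.commute)
qed

lemma tau2_row_1_2:
  assumes "2 \<le> i" "i < n" "c0 \<noteq> 0"
  shows "2 * complex_of_real c0 * (tau2_row n i c0 1 a b c d + tau2_row n i c0 2 a b c d)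
       = 2 * tens (Xdiff n 1 2) (Xnegtwo n 1) a b c d - 2 * tens (Xdiff n 2 1) (Xnegtwo n 2) a b c d
       - tens (H12 n) (Xnegsum n 1 2) a b c d"
proof -
  have in12: "1 \<in> {1..i}" "2 \<in> {1..i}" using assms by auto
  have "2 \<le> n" using assms by simp
  show ?thesis
    unfolding tau2_row_def omega_bar_entry[OF in12(1) in12(1)] omega_bar_entry[OF in12(1) in12(2)]
      omega_bar_entry[OF in12(2) in12(1)] omega_bar_entry[OF in12(2) in12(2)]
      Xnegsum_commute[of n 2 1] tens_def H12_eq[OF \<open>2 \<le> n\<close>]
    using in12 assms(3) by (simp add: pr_lgamma_Emat field_simps)
qed

lemma tau2_row_ge_3:
  assumes "p \<in> {3..i}" "c0 \<noteq> 0"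
  shows "2 * complex_of_real c0 * tau2_row n i c0 p a b c d
       = tens (Xdiff n p 2) (Xnegsum n 1 p) a b c d - tens (Xdiff n p 1) (Xnegsum n 2 p) a b c d"
proof -
  have p: "p \<in> {1..i}" and in12: "1 \<in> {1..i}" "2 \<in> {1..i}" using assms(1) by auto
  show ?thesis
    unfolding tau2_row_def omega_bar_entry[OF p in12(1)] omega_bar_entry[OF p in12(2)]
      Xnegsum_commute[of n p] tens_def
    using assms by (simp add: pr_lgamma_Emat field_simps)
qed

lemma pr_tens_tau2_bar_Y_mu_gamma_expansion:
  assumes "2 \<le> i" "i < n" "c0 \<noteq> 0"
  shows "4 * complex_of_real c0 * pr_tens n i (tau2_bar n i c0 (Y_mu_gamma n i)) a b c d
       = 2 * tens (Xdiff n 1 2) (Xnegtwo n 1) a b c d - 2 * tens (Xdiff n 2 1) (Xnegtwo n 2) a b c d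
       + (\<Sum>k\<in>{3..i}. tens (Xdiff n k 2) (Xnegsum n 1 k) a b c d)
       - (\<Sum>k\<in>{3..i}. tens (Xdiff n k 1) (Xnegsum n 2 k) a b c d)
       - tens (H12 n) (Xnegsum n 1 2) a b c d"
proof (cases "c \<in> {n+1..n+i} \<and> d \<in> {1..i}")
  case True
  let ?r = "\<lambda>p. 2 * complex_of_real c0 * tau2_row n i c0 p a b c d"
  have "4 * complex_of_real c0 * pr_tens n i (tau2_bar n i c0 (Y_mu_gamma n i)) a b c d
      = (\<Sum>p\<in>{1..i}. ?r p)"
    unfolding pr_tens_tau2_bar_Y_mu_gamma[OF assms(1,2) conjunct1[OF True] conjunct2[OF True]]
    by (simp add: sum_distrib_left sum_distrib_right mult_ac)
  also have "{1..i} = insert 1 (insert 2 {3..i})" using assms by auto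
  also have "(\<Sum>p\<in>insert 1 (insert 2 {3..i}). ?r p)
      = 2 * complex_of_real c0 * (tau2_row n i c0 1 a b c d + tau2_row n i c0 2 a b c d)
        + (\<Sum>p\<in>{3..i}. ?r p)"
    by (simp add: distrib_left)
  also have "(\<Sum>p\<in>{3..i}. ?r p)
      = (\<Sum>k\<in>{3..i}. tens (Xdiff n k 2) (Xnegsum n 1 k) a b c d - tens (Xdiff n k 1) (Xnegsum n 2 k) a b c d)"
    by (rule sum.cong[OF refl tau2_row_ge_3[OF _ assms(3)]])
  finally show ?thesis
    unfolding tau2_row_1_2[OF assms] by (simp add: sum_subtractf algebra_simps)
next
  case False
  then have "Xnegtwo n 1 c d = 0" "Xnegtwo n 2 c d = 0" "Xnegsum n 1 2 c d = 0"
      "\<forall>k\<in>{3..i}. Xnegsum n 1 k c d = 0 \<and> Xnegsum n 2 k c d = 0"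
    using assms by (auto simp: Xnegtwo_def Xnegsum_def Emat_def hat_def)
  moreover have "pr_tens n i (tau2_bar n i c0 (Y_mu_gamma n i)) a b c d = 0"
    using False by (simp only: pr_tens_eq[OF less_imp_le[OF assms(2)]]) simp
  ultimately show ?thesis by (simp add: tens_def)
qed

theorem lemma5p5:
  fixes n i :: nat and c0 :: real
  assumes "n \<ge> 3" and "2 \<le> i" and "i \<le> n - 1" and "c0 > 0"
  shows "(\<lambda>a b c d. complex_of_real (8 * c0^2 / (real i + 1)) *
            pr_tens n i (tau2_bar n i c0 (\<lambda>r s. Xnegsum n 1 (i+1) r s + Xdiff n (i+1) 2 r s)) a b c d)
       = (\<lambda>a b c d.
            complex_of_real (4 * c0 / (real i + 1)) * tens (Xdiff n 1 2) (Xnegtwo n 1) a b c d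
          - complex_of_real (4 * c0 / (real i + 1)) * tens (Xdiff n 2 1) (Xnegtwo n 2) a b c d
          + complex_of_real (2 * c0 / (real i + 1)) * (\<Sum>k\<in>{3..i}. tens (Xdiff n k 2) (Xnegsum n 1 k) a b c d)
          - complex_of_real (2 * c0 / (real i + 1)) * (\<Sum>k\<in>{3..i}. tens (Xdiff n k 1) (Xnegsum n 2 k) a b c d)
          - complex_of_real (2 * c0 / (real i + 1)) * tens (H12 n) (Xnegsum n 1 2) a b c d)"
proof -
  define K where "K = complex_of_real (2 * c0 / (real i + 1))"
  have "2 \<le> i" "i < n" "c0 \<noteq> 0" using assms by auto
  note expansion = pr_tens_tau2_bar_Y_mu_gamma_expansion[OF this]
  have scale: "complex_of_real (8 * c0^2 / (real i + 1)) = K * (4 * complex_of_real c0)"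
    "complex_of_real (4 * c0 / (real i + 1)) = 2 * K"
    unfolding K_def by (simp_all add: power2_eq_square)
  show ?thesis
    unfolding Y_mu_gamma_def[symmetric] scale K_def[symmetric] mult.assoc[of K] expansion
    by (simp add: algebra_simps)
qed

end
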